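(* Let $p$ be a polynomial with real coefficients having $m$ distinct simple roots $\alpha_1,\dots,\alpha_m$, all negative real numbers, and let $q$ be a polynomial with real coefficients such that $\deg(q)<\deg(p)$ and $q,p$ have no common zero. If the divided differences satisfy $q[\alpha_1,\alpha_2,\dots,\alpha_j]\ge 0$ for $j=1,2,\dots,m$, then $(q(n)/p(n))_{n\in\mathbb Z_+}$ is a Hausdorff moment sequence.
   Context: For distinct reals $x_1,\dots,x_j$, $q[x_1,\dots,x_j]=\sum_{i=1}^j q(x_i)/\prod_{k\ne i}(x_i-x_k)$. A sequence $(x_n)_{n\in\mathbb Z_+}$ of positive numbers is a Hausdorff moment sequence if there is a positive Radon measure $\mu$ on $[0,1]$ with $x_n=\int_0^1 t^n\,d\mu(t)$ for all $n\in\mathbb Z_+$. *)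

theory Defs
  imports "HOL-Analysis.Analysis" "HOL-Computational_Algebra.Polynomial"
begin

text \<open>Divided difference q[x_0,...,x_{j-1}] of a polynomial q at the first j
  points of the sequence x (0-indexed), as in the paper.\<close>
definition divdiff :: "real poly \<Rightarrow> (nat \<Rightarrow> real) \<Rightarrow> nat \<Rightarrow> real" where
  "divdiff q x j = (\<Sum>i<j. poly q (x i) / (\<Prod>k\<in>{..<j} - {i}. (x i - x k)))"

definition hausdorff_moment_seq :: "(nat \<Rightarrow> real) \<Rightarrow> bool" where
  "hausdorff_moment_seq s \<longleftrightarrow> (\<forall>n. s n > 0) \<and>
     (\<exists>M :: real measure. sets M = sets borel \<and> finite_measure M \<and>
        emeasure M (- {0..1}) = 0 \<and>
        (\<forall>n. integrable M (\<lambda>t. t ^ n) \<and> s n = (\<integral>t. t ^ n \<partial>M)))"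

end

theory Submission
  imports Defs
begin

(* By partial fractions, q(n)/p(n) = sum_i c_i / (n - a_i) with c_i = q(a_i) / prod_{k<>i} (a_i - a_k),
   and 1/(n - a_i) is the n-th moment of t^(-a_i-1) dt on (0,1]. Hence q(n)/p(n) is the n-th
   moment of the density K_m(t)/t, where K_j(t) = sum_{i<j} c_i t^(-a_i) is the divided difference
   of s |-> q(s) t^(-s) at a_0, ..., a_(j-1). This density is nonnegative: K_j(1) = q[a_0, ..., a_(j-1)]
   is nonnegative, and the derivative of t^(a_(j-1)) K_j(t) is -t^(a_(j-1)-1) K_(j-1)(t), which is
   nonpositive on (0,1] by induction on j. Moments of a measure on [0,1] are nonincreasing in n, so
   they are positive as soon as infinitely many are nonzero, and q has only finitely many zeros. *)

definition divdiff_coeff :: "real poly \<Rightarrow> (nat \<Rightarrow> real) \<Rightarrow> nat \<Rightarrow> nat \<Rightarrow> real" where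
  "divdiff_coeff q x j i = poly q (x i) / (\<Prod>k\<in>{..<j} - {i}. (x i - x k))"

definition divdiff_kernel :: "real poly \<Rightarrow> (nat \<Rightarrow> real) \<Rightarrow> nat \<Rightarrow> real \<Rightarrow> real" where
  "divdiff_kernel q x j t = (\<Sum>i<j. divdiff_coeff q x j i * t powr (- x i))"

lemma divdiff_coeff_Suc:
  assumes "i < l" and "x i \<noteq> x l"
  shows "divdiff_coeff q x (Suc l) i = divdiff_coeff q x l i / (x i - x l)"
proof -
  have "{..<Suc l} - {i} = insert l ({..<l} - {i})" using assms(1) by auto
  then show ?thesis
    using assms by (simp add: divdiff_coeff_def field_simps)
qed

lemma poly_eq_lagrange_interpolation:
  fixes q :: "real poly"
  assumes inj: "inj_on x {..<m}" and deg: "degree q < m"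
  shows "poly q y = (\<Sum>i<m. divdiff_coeff q x m i * (\<Prod>k\<in>{..<m} - {i}. (y - x k)))"
proof -
  define L where "L = (\<Sum>i<m. smult (divdiff_coeff q x m i) (\<Prod>k\<in>{..<m} - {i}. [:- x k, 1:]))"
  have poly_L: "poly L y = (\<Sum>i<m. divdiff_coeff q x m i * (\<Prod>k\<in>{..<m} - {i}. (y - x k)))" for y
    by (simp add: L_def poly_sum poly_prod)
  have "degree L \<le> m - 1"
    unfolding L_def
  proof (intro degree_sum_le order.trans[OF degree_smult_le])
    fix i assume "i \<in> {..<m}"
    then show "degree (\<Prod>k\<in>{..<m} - {i}. [:- x k, 1:]) \<le> m - 1"
      using degree_prod_sum_le[of "{..<m} - {i}" "\<lambda>k. [:- x k, 1:]"] by (simp add: o_def)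
  qed simp
  then have deg_diff: "degree (q - L) < m"
    using deg degree_diff_le[of q "m - 1" L] by linarith
  have "poly (q - L) (x j) = 0" if j: "j < m" for j
  proof -
    have "(\<Prod>k\<in>{..<m} - {j}. (x j - x k)) \<noteq> 0"
      using inj j by (auto simp: inj_on_def)
    moreover have "(\<Prod>k\<in>{..<m} - {i}. (x j - x k)) = 0" if "i < m" "i \<noteq> j" for i
      using that j by (intro prod_zero) auto
    ultimately have "poly L (x j) = poly q (x j)"
      unfolding poly_L using j
      by (subst sum.remove[of _ j]) (auto simp: divdiff_coeff_def intro!: sum.neutral)
    then show ?thesis by simp
  qed
  then have "x ` {..<m} \<subseteq> {z. poly (q - L) z = 0}" by auto
  moreover have "card (x ` {..<m}) = m" using card_image[OF inj] by simp
  ultimately have "q - L = 0"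
    using deg_diff card_poly_roots_bound poly_roots_finite card_mono
    by (metis leD order.trans)
  then have "poly q y = poly L y" by simp
  with poly_L show ?thesis by simp
qed

lemma partial_fraction_decomposition:
  fixes q :: "real poly"
  assumes "inj_on x {..<m}" and "degree q < m" and "y \<notin> x ` {..<m}"
  shows "poly q y / (\<Prod>k<m. (y - x k)) = (\<Sum>i<m. divdiff_coeff q x m i / (y - x i))"
proof -
  have "divdiff_coeff q x m i * (\<Prod>k\<in>{..<m} - {i}. (y - x k)) / (\<Prod>k<m. (y - x k))
          = divdiff_coeff q x m i / (y - x i)" if "i < m" for i
    using that assms(3) by (subst prod.remove[of _ i]) auto
  then show ?thesis
    by (simp add: poly_eq_lagrange_interpolation[OF assms(1,2)] sum_divide_distrib)
qed

lemma has_real_derivative_divdiff_kernel_step: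
  assumes inj: "inj_on x {..<Suc l}" and u: "0 < u"
  shows "((\<lambda>u. \<Sum>i<Suc l. divdiff_coeff q x (Suc l) i * u powr (x l - x i)) has_real_derivative
            - (u powr (x l - 1) * divdiff_kernel q x l u)) (at u)"
proof (rule DERIV_cong)
  show "((\<lambda>u. \<Sum>i<Suc l. divdiff_coeff q x (Suc l) i * u powr (x l - x i)) has_real_derivative
          (\<Sum>i<Suc l. divdiff_coeff q x (Suc l) i * ((x l - x i) * u powr (x l - x i - 1)))) (at u)"
    by (intro DERIV_sum DERIV_cmult has_real_derivative_powr u)
  have "divdiff_coeff q x (Suc l) i * ((x l - x i) * u powr (x l - x i - 1))
          = - (u powr (x l - 1) * (divdiff_coeff q x l i * u powr (- x i)))" if "i < l" for i
  proof -
    have "x i \<noteq> x l" using inj that by (auto simp: inj_on_def)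
    moreover have "u powr (x l - x i - 1) = u powr (x l - 1) * u powr (- x i)"
      by (subst powr_add[symmetric]) (simp add: algebra_simps)
    ultimately show ?thesis
      using that by (simp add: divdiff_coeff_Suc field_simps)
  qed
  then show "(\<Sum>i<Suc l. divdiff_coeff q x (Suc l) i * ((x l - x i) * u powr (x l - x i - 1)))
      = - (u powr (x l - 1) * divdiff_kernel q x l u)"
    by (simp add: divdiff_kernel_def sum_distrib_left sum_negf)
qed

lemma divdiff_kernel_nonneg:
  assumes inj: "inj_on x {..<j}"
    and dd: "\<And>k. 1 \<le> k \<Longrightarrow> k \<le> j \<Longrightarrow> divdiff q x k \<ge> 0"
    and t: "0 < t" "t \<le> 1"
  shows "0 \<le> divdiff_kernel q x j t"
  using assms
proof (induction j arbitrary: t)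
  case 0
  then show ?case by (simp add: divdiff_kernel_def)
next
  case (Suc l)
  define F where "F u = (\<Sum>i<Suc l. divdiff_coeff q x (Suc l) i * u powr (x l - x i))" for u
  have "F 1 \<le> F t"
  proof (rule DERIV_nonpos_imp_nonincreasing[of t 1 F])
    fix u assume "t \<le> u" "u \<le> 1"
    with Suc.prems have "0 \<le> divdiff_kernel q x l u" "0 < u"
      by (auto intro!: Suc.IH intro: inj_on_subset)
    then show "\<exists>y. (F has_real_derivative y) (at u) \<and> y \<le> 0"
      using has_real_derivative_divdiff_kernel_step[OF Suc.prems(1), of u] unfolding F_def
      by (intro exI[of _ "- (u powr (x l - 1) * divdiff_kernel q x l u)"]) simp
  qed (use Suc.prems in simp)
  moreover have "F 1 = divdiff q x (Suc l)"
    by (simp add: F_def divdiff_def divdiff_coeff_def)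
  moreover have "divdiff_kernel q x (Suc l) t = t powr (- x l) * F t"
  proof -
    have "t powr (- x l) * t powr (x l - x i) = t powr (- x i)" for i
      by (subst powr_add[symmetric]) simp
    then show ?thesis
      unfolding F_def divdiff_kernel_def sum_distrib_left
      by (intro sum.cong) (simp_all add: mult.left_commute)
  qed
  moreover have "0 \<le> divdiff q x (Suc l)"
    using Suc.prems(2) by simp
  ultimately show ?case
    by (simp add: zero_le_mult_iff)
qed

lemma has_bochner_integral_powr_unit_interval:
  fixes c :: real
  assumes "c > -1"
  shows "has_bochner_integral lborel (\<lambda>t. indicator {0<..1} t * t powr c) (1 / (c + 1))"
proof (rule has_bochner_integral_nn_integral)
  have "((\<lambda>t. t powr c) has_integral (1 / (c + 1))) {0..1}"
    using has_integral_powr_from_0[of c 1] assms by simp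
  then have "((\<lambda>t. t powr c) has_integral (1 / (c + 1))) {0<..1}"
    by (rule has_integral_spike_set_eq[THEN iffD1, rotated 2])
      (auto intro: negligible_subset[of "{0}"])
  then show "(\<integral>\<^sup>+t. indicator {0<..1} t * t powr c \<partial>lborel) = ennreal (1 / (c + 1))"
    by (intro nn_integral_has_integral_lebesgue) auto
qed (use assms in auto)

lemma has_bochner_integral_divdiff_kernel_moment:
  assumes "\<And>i. i < j \<Longrightarrow> x i < real n"
  shows "has_bochner_integral lborel (\<lambda>t. indicator {0<..1} t * divdiff_kernel q x j t / t * t ^ n)
           (\<Sum>i<j. divdiff_coeff q x j i / (real n - x i))"
proof -
  have "has_bochner_integral lborel
          (\<lambda>t. \<Sum>i<j. divdiff_coeff q x j i * (indicator {0<..1} t * t powr (real n - x i - 1)))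
          (\<Sum>i<j. divdiff_coeff q x j i * (1 / (real n - x i - 1 + 1)))"
    using assms by (intro has_bochner_integral_sum has_bochner_integral_mult_right
                      has_bochner_integral_powr_unit_interval) auto
  moreover have "(\<Sum>i<j. divdiff_coeff q x j i * (indicator {0<..1} t * t powr (real n - x i - 1)))
      = indicator {0<..1} t * divdiff_kernel q x j t / t * t ^ n" for t :: real
  proof (cases "t \<in> {0<..1}")
    case True
    then have "t powr (real n - x i - 1) = t powr (- x i) / t * t ^ n" for i
      by (simp add: powr_diff powr_add powr_realpow[symmetric] powr_minus field_simps)
    with True show ?thesis
      by (simp add: divdiff_kernel_def sum_distrib_left sum_divide_distrib mult_ac)
  qed simp
  ultimately show ?thesis by simp
qed

lemma hausdorff_moment_seq_density:
  fixes g :: "real \<Rightarrow> real" and s :: "nat \<Rightarrow> real"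
  assumes g_meas: "g \<in> borel_measurable lborel"
    and g_nonneg: "\<And>t. 0 \<le> g t"
    and g_outside: "\<And>t. t \<notin> {0..1} \<Longrightarrow> g t = 0"
    and moments: "\<And>n. has_bochner_integral lborel (\<lambda>t. g t * t ^ n) (s n)"
    and nonzero: "\<And>n. \<exists>k\<ge>n. s k \<noteq> 0"
  shows "hausdorff_moment_seq s"
proof -
  have s_eq: "s n = (\<integral>t. g t * t ^ n \<partial>lborel)" for n
    using has_bochner_integral_integral_eq[OF moments] by simp
  have "0 \<le> g t * t ^ n" for t n
    using g_nonneg[of t] g_outside[of t] by (cases "t \<in> {0..1}") auto
  then have s_nonneg: "0 \<le> s n" for n
    unfolding s_eq by (intro Bochner_Integration.integral_nonneg)
  have s_antimono: "s k \<le> s n" if "n \<le> k" for n k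
    unfolding s_eq
  proof (rule integral_mono)
    show "integrable lborel (\<lambda>t. g t * t ^ k)" "integrable lborel (\<lambda>t. g t * t ^ n)"
      using moments by (auto simp: has_bochner_integral_iff)
    show "g t * t ^ k \<le> g t * t ^ n" for t
      using g_nonneg[of t] g_outside[of t] that
      by (cases "t \<in> {0..1}") (auto intro!: mult_left_mono power_decreasing)
  qed
  have s_pos: "0 < s n" for n
  proof -
    obtain k where "n \<le> k" "s k \<noteq> 0" using nonzero by blast
    with s_antimono[of n k] s_nonneg[of k] show ?thesis by linarith
  qed
  define M where "M = density lborel (\<lambda>t. ennreal (g t))"
  have M_moments: "has_bochner_integral M (\<lambda>t. t ^ n) (s n)" for n
    unfolding M_def using moments g_nonneg g_meas by (intro has_bochner_integral_density) auto
  have "emeasure M (space M) = ennreal (s 0)"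
    using moments[of 0] g_nonneg g_meas unfolding M_def
    by (simp add: emeasure_density nn_integral_eq_integral has_bochner_integral_iff)
  then have "finite_measure M"
    by (intro finite_measureI) simp
  moreover have "emeasure M (- {0..1}) = 0"
  proof -
    have "(\<lambda>t. ennreal (g t) * indicator (- {0..1}) t) = (\<lambda>t. 0)"
      using g_outside by (force simp: fun_eq_iff indicator_def)
    then show ?thesis
      unfolding M_def using g_meas by (simp add: emeasure_density)
  qed
  ultimately show ?thesis
    unfolding hausdorff_moment_seq_def using s_pos M_moments
    by (intro conjI allI exI[of _ M]) (auto simp: M_def has_bochner_integral_iff)
qed

lemma ex_nat_ge_poly_nonzero:
  fixes q :: "real poly"
  assumes "q \<noteq> 0"
  shows "\<exists>k\<ge>n. poly q (real k) \<noteq> 0"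
proof (rule ccontr)
  assume "\<not> ?thesis"
  then have "real ` {n..} \<subseteq> {x. poly q x = 0}" by auto
  moreover have "infinite (real ` {n..})"
    using infinite_Ici[of n] by (simp add: finite_image_iff)
  ultimately show False
    using poly_roots_finite[OF assms] finite_subset by blast
qed

theorem mainTheorem3:
  fixes p q :: "real poly" and \<alpha> :: "nat \<Rightarrow> real" and m :: nat
  assumes p_def: "p = (\<Prod>i<m. [:- \<alpha> i, 1:])"
    and distinct: "inj_on \<alpha> {..<m}"
    and neg: "\<And>i. i < m \<Longrightarrow> \<alpha> i < 0"
    and deg: "degree q < degree p"
    and nocommon: "\<not> (\<exists>z. poly p z = 0 \<and> poly q z = 0)"
    and dd: "\<And>j. 1 \<le> j \<Longrightarrow> j \<le> m \<Longrightarrow> divdiff q \<alpha> j \<ge> 0"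
  shows "hausdorff_moment_seq (\<lambda>n. poly q (real n) / poly p (real n))"
proof -
  have "degree p \<le> m"
    unfolding p_def using degree_prod_sum_le[of "{..<m}" "\<lambda>k. [:- \<alpha> k, 1:]"] by (simp add: o_def)
  with deg have deg_q: "degree q < m" by simp
  have poly_p: "poly p y = (\<Prod>k<m. (y - \<alpha> k))" for y
    by (simp add: p_def poly_prod)
  have below_nat: "\<alpha> i < real n" if "i < m" for i n
    using neg[OF that] of_nat_0_le_iff[of n] by linarith
  then have p_pos: "0 < poly p (real n)" for n
    unfolding poly_p by (intro prod_pos) simp
  have "q \<noteq> 0"
    using nocommon deg_q by (auto simp: poly_p intro!: exI[of _ "\<alpha> 0"] bexI[of _ 0])
  define g where "g t = indicator {0<..1} t * divdiff_kernel q \<alpha> m t / t" for t :: real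
  have moments: "has_bochner_integral lborel (\<lambda>t. g t * t ^ n) (poly q (real n) / poly p (real n))" for n
  proof -
    have "real n \<notin> \<alpha> ` {..<m}"
      using below_nat[of _ n] by (metis imageE lessThan_iff less_irrefl)
    then have "poly q (real n) / poly p (real n) = (\<Sum>i<m. divdiff_coeff q \<alpha> m i / (real n - \<alpha> i))"
      unfolding poly_p by (rule partial_fraction_decomposition[OF distinct deg_q])
    with has_bochner_integral_divdiff_kernel_moment[of m \<alpha> n q, OF below_nat] show ?thesis
      by (simp add: g_def)
  qed
  show ?thesis
  proof (rule hausdorff_moment_seq_density[OF _ _ _ moments])
    show "g \<in> borel_measurable lborel"
      unfolding g_def divdiff_kernel_def by measurable
    show "0 \<le> g t" for t
      using divdiff_kernel_nonneg[OF distinct dd, of t] by (simp add: g_def indicator_def)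
    show "g t = 0" if "t \<notin> {0..1}" for t
      using that by (simp add: g_def)
    show "\<exists>k\<ge>n. poly q (real k) / poly p (real k) \<noteq> 0" for n
      using ex_nat_ge_poly_nonzero[OF \<open>q \<noteq> 0\<close>] p_pos by (metis divide_eq_0_iff less_irrefl)
  qed
qed

end
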